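(* Let $n\ge 1$, $k\ge 2$, and consider the tensor-based HPDS $\dot{\mathbf x}(t)=\mathscr A\mathbf x(t)^{k-1}$ with unknown almost symmetric $\mathscr A\in\mathbb R^{n\times\cdots\times n}$ ($k$ modes). Let $\mathbf X_0,\mathbf X_1\in\mathbb R^{n\times T}$ be the sampled state and state-derivative data matrices, and $\hat{\mathbf X}_0=\mathbf X_0\odot\mathbf X_0\odot\cdots\odot\mathbf X_0$ ($k-1$ factors). Then the data $(\mathbf X_0,\mathbf X_1)$ determine $\mathscr A$ uniquely (i.e. there is exactly one almost symmetric tensor $\mathscr A$ with $\mathbf A_{(k)}\hat{\mathbf X}_0=\mathbf X_1$) if and only if $$\mathrm{rank}(\hat{\mathbf X}_0)=\sum_{j=1}^{\min\{n,k-1\}}\frac{n!}{j!(n-j)!}\cdot\frac{(k-2)!}{(j-1)!(k-j-1)!}.$$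
   Context: A cubical $k$th-order tensor $\mathscr A\in\mathbb R^{n\times\cdots\times n}$ is almost symmetric if its entries $\mathscr A_{j_1\cdots j_k}$ are invariant under every permutation of the first $k-1$ indices $j_1,\dots,j_{k-1}$. The $k$-mode matricization $\mathbf A_{(k)}\in\mathbb R^{n\times n^{k-1}}$ is defined by $(\mathbf A_{(k)})_{j_k,c}=\mathscr A_{j_1\cdots j_k}$ with $c=j_1+\sum_{i=2}^{k-1}(j_i-1)n^{i-1}$. For $\mathbf x\in\mathbb R^n$, $\mathscr A\mathbf x^{k-1}:=\mathscr A\times_1\mathbf x\times_2\cdots\times_{k-1}\mathbf x\in\mathbb R^n$ (contraction of the first $k-1$ modes with $\mathbf x$), which equals $\mathbf A_{(k)}\mathbf x^{[k-1]}$ where $\mathbf x^{[k-1]}=\mathbf x\otimes\cdots\otimes\mathbf x$ ($k-1$ factors) is the Kronecker power. The Khatri–Rao product of $\mathbf A\in\mathbb R^{n\times s}$ and $\mathbf B\in\mathbb R^{m\times s}$ is $\mathbf A\odot\mathbf B=[\mathbf a_1\otimes\mathbf b_1,\dots,\mathbf a_s\otimes\mathbf b_s]$ (columnwise Kronecker product). Data: $\mathbf X_0=[\mathbf x(t_0),\mathbf x(t_0+\tau),\dots,\mathbf x(t_0+(T-1)\tau)]$, $\mathbf X_1=[\dot{\mathbf x}(t_0),\dots,\dot{\mathbf x}(t_0+(T-1)\tau)]$ for a trajectory of the system, with sampling time $\tau>0$, so that $\mathbf X_1=\mathbf A_{(k)}\hat{\mathbf X}_0$. *)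

theory Defs
  imports Complex_Main "Jordan_Normal_Form.DL_Rank"
begin

text \<open>Tensors of order k with mode sizes n, indices 0-based, represented as functions on
index lists; only lists of length k with entries < n are meaningful.\<close>

type_synonym tensor = "nat list \<Rightarrow> real"

definition valid_idx :: "nat \<Rightarrow> nat \<Rightarrow> nat list set" where
  "valid_idx n m = {js. length js = m \<and> set js \<subseteq> {..<n}}"

text \<open>A tensor in R^{n x ... x n} (k modes): zero outside the valid index range
(so that equality of tensors is equality of their entries).\<close>
definition is_tensor :: "nat \<Rightarrow> nat \<Rightarrow> tensor \<Rightarrow> bool" where
  "is_tensor n k A \<longleftrightarrow> (\<forall>js. js \<notin> valid_idx n k \<longrightarrow> A js = 0)"

definition almost_symmetric :: "nat \<Rightarrow> nat \<Rightarrow> tensor \<Rightarrow> bool" where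
  "almost_symmetric n k A \<longleftrightarrow> is_tensor n k A \<and>
     (\<forall>js \<in> valid_idx n k. \<forall>p. p permutes {..<k-1} \<longrightarrow>
        A (map (\<lambda>i. js ! p i) [0..<k]) = A js)"

definition tensor_apply :: "nat \<Rightarrow> nat \<Rightarrow> tensor \<Rightarrow> (nat \<Rightarrow> real) \<Rightarrow> nat \<Rightarrow> real" where
  "tensor_apply n k A x i =
     (\<Sum>js \<in> valid_idx n (k-1). A (js @ [i]) * (\<Prod>m<k-1. x (js ! m)))"

text \<open>k-mode matricization: entry (j_k, c) with c = j_1 + sum_{i>=2} j_i n^(i-1) (0-based).\<close>
definition matricize :: "nat \<Rightarrow> nat \<Rightarrow> tensor \<Rightarrow> real mat" where
  "matricize n k A = mat n (n^(k-1))
     (\<lambda>(i, c). A (map (\<lambda>m. c div n^m mod n) [0..<k-1] @ [i]))"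

definition khatri_rao :: "real mat \<Rightarrow> real mat \<Rightarrow> real mat" where
  "khatri_rao A B = mat (dim_row A * dim_row B) (dim_col A)
     (\<lambda>(r, c). A $$ (r div dim_row B, c) * B $$ (r mod dim_row B, c))"

fun kr_power :: "real mat \<Rightarrow> nat \<Rightarrow> real mat" where
  "kr_power X 0 = mat 1 (dim_col X) (\<lambda>_. 1)"
| "kr_power X (Suc 0) = X"
| "kr_power X (Suc (Suc m)) = khatri_rao X (kr_power X (Suc m))"

definition mat_rank :: "real mat \<Rightarrow> nat" where
  "mat_rank M = vec_space.rank (dim_row M) M"

definition data_mat :: "nat \<Rightarrow> nat \<Rightarrow> real \<Rightarrow> real \<Rightarrow> (real \<Rightarrow> nat \<Rightarrow> real) \<Rightarrow> real mat" where
  "data_mat n T t0 \<tau> x = mat n T (\<lambda>(i, s). x (t0 + real s * \<tau>) i)"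

end

theory Submission
  imports Defs "Jordan_Normal_Form.Gram_Schmidt"
begin

text \<open>
  Put \<open>m = k - 1\<close> and index the columns of the \<open>k\<close>-mode matricization by \<open>c < n\<^sup>m\<close>, whose
  base-\<open>n\<close> digits are the first \<open>m\<close> tensor indices. A tensor is almost symmetric iff every row
  of its matricization is constant on the classes of indices with equal digit multisets, and
  every column of the Khatri-Rao power \<open>K\<close> of the state data is constant on these classes
  as well, its entries being products of data entries over the digits. Since \<open>A\<close> solves
  the equation, the solution is unique iff no nonzero class-constant vector \<open>v\<close> is orthogonal
  to all columns of \<open>K\<close>: otherwise adding to \<open>A\<close> the tensor whose matricization has all rows
  equal to \<open>v\<close> gives a second solution. The class-constant vectors form a space whose
  dimension is the number \<open>(n + m - 1) choose m\<close> of multisets of size \<open>m\<close> over \<open>n\<close> symbols,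
  and by Gram-Schmidt the condition says that the columns of \<open>K\<close> span this space, i.e. that
  \<open>rank K = (n + m - 1) choose m\<close>. Vandermonde's identity turns this binomial coefficient into
  the stated sum.
\<close>

section \<open>Vectors constant on classes of coordinates\<close>

definition class_const_vecs :: "(nat \<Rightarrow> 'b) \<Rightarrow> nat \<Rightarrow> 'a :: field vec set" where
  "class_const_vecs cls N =
     {v \<in> carrier_vec N. \<forall>c<N. \<forall>c'<N. cls c = cls c' \<longrightarrow> v $ c = v $ c'}"

definition class_indicator :: "(nat \<Rightarrow> 'b) \<Rightarrow> nat \<Rightarrow> 'b \<Rightarrow> 'a :: field vec" where
  "class_indicator cls N \<gamma> = vec N (\<lambda>c. if cls c = \<gamma> then 1 else 0)"

lemma class_const_vecsI:
  assumes "v \<in> carrier_vec N"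
    and "\<And>c c'. c < N \<Longrightarrow> c' < N \<Longrightarrow> cls c = cls c' \<Longrightarrow> v $ c = v $ c'"
  shows "v \<in> class_const_vecs cls N"
  using assms unfolding class_const_vecs_def by blast

lemma class_const_vecsD:
  assumes "v \<in> class_const_vecs cls N"
  shows "v \<in> carrier_vec N"
    and "c < N \<Longrightarrow> c' < N \<Longrightarrow> cls c = cls c' \<Longrightarrow> v $ c = v $ c'"
  using assms unfolding class_const_vecs_def by blast+

lemma minus_class_const_vecs:
  assumes "v \<in> class_const_vecs cls N" "w \<in> class_const_vecs cls N"
  shows "v - w \<in> class_const_vecs cls N"
proof (rule class_const_vecsI)
  have carrier: "v \<in> carrier_vec N" "w \<in> carrier_vec N"
    using assms by (simp_all add: class_const_vecsD(1))
  then show "v - w \<in> carrier_vec N"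
    by simp
  fix c c' assume c: "c < N" "c' < N" "cls c = cls c'"
  then have "v $ c = v $ c'" "w $ c = w $ c'"
    using class_const_vecsD(2)[OF assms(1)] class_const_vecsD(2)[OF assms(2)] by blast+
  with carrier c show "(v - w) $ c = (v - w) $ c'"
    by simp
qed

lemma conjugate_vec_eq_self:
  assumes "\<And>x :: 'a :: conjugatable_field. conjugate x = x"
  shows "conjugate (v :: 'a vec) = v"
  by (rule eq_vecI) (simp_all add: assms)

context vec_space
begin

abbreviation class_indicators :: "(nat \<Rightarrow> 'b) \<Rightarrow> 'a vec set" where
  "class_indicators cls \<equiv> class_indicator cls n ` cls ` {..<n}"

lemma ex_maximal_lin_indpt_subset:
  assumes S: "finite S"
  shows "\<exists>U. maximal U (\<lambda>T. T \<subseteq> S \<and> lin_indpt T)"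
proof -
  have "finite T \<and> card T \<le> card S" if "T \<subseteq> S \<and> lin_indpt T" for T
    using that S finite_subset card_mono by blast
  moreover have "{} \<subseteq> S \<and> lin_indpt {}"
    unfolding lin_dep_def by auto
  ultimately show ?thesis
    using maximal_exists[where P = "\<lambda>T. T \<subseteq> S \<and> lin_indpt T"] by blast
qed

lemma class_indicators_carrier: "class_indicators cls \<subseteq> carrier_vec n"
  by (auto simp: class_indicator_def)

lemma index_lincomb_class_indicators:
  assumes c: "c < n"
  shows "lincomb a (class_indicators cls) $ c = a (class_indicator cls n (cls c))"
proof -
  let ?e = "class_indicator cls n (cls c)"
  have "lincomb a (class_indicators cls) $ c = (\<Sum>e \<in> class_indicators cls. a e * e $ c)"
    by (rule lincomb_index[OF c class_indicators_carrier])
  also have "\<dots> = (\<Sum>e \<in> class_indicators cls. if e = ?e then a e else 0)"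
    by (rule sum.cong) (use c in \<open>auto simp: class_indicator_def split: if_split_asm\<close>)
  also have "\<dots> = a ?e"
    using c by simp
  finally show ?thesis .
qed

lemma inj_on_class_indicator: "inj_on (class_indicator cls n :: 'b \<Rightarrow> 'a vec) (cls ` {..<n})"
proof (rule inj_onI)
  fix \<gamma> \<delta> :: 'b
  assume "\<gamma> \<in> cls ` {..<n}" and eq: "class_indicator cls n \<gamma> = (class_indicator cls n \<delta> :: 'a vec)"
  then obtain c where "c < n" "cls c = \<gamma>" by auto
  with arg_cong[OF eq, of "\<lambda>v. v $ c"] show "\<gamma> = \<delta>"
    by (auto simp: class_indicator_def split: if_splits)
qed

lemma class_const_vecs_subset_span_class_indicators:
  "class_const_vecs cls n \<subseteq> span (class_indicators cls)"
proof
  fix v :: "'a vec" assume "v \<in> class_const_vecs cls n"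
  note v = class_const_vecsD(1)[OF this] and v_const = class_const_vecsD(2)[OF this]
  define rep where "rep e = (SOME c. c < n \<and> e $ c = (1 :: 'a))" for e :: "'a vec"
  have rep: "rep (class_indicator cls n (cls c)) < n \<and>
      cls (rep (class_indicator cls n (cls c))) = cls c" if c: "c < n" for c
    using someI[of "\<lambda>d. d < n \<and> class_indicator cls n (cls c) $ d = (1 :: 'a)" c] c
    by (auto simp: rep_def class_indicator_def split: if_splits)
  have "v = lincomb (\<lambda>e. v $ rep e) (class_indicators cls)"
  proof (rule eq_vecI)
    have L: "lincomb (\<lambda>e. v $ rep e) (class_indicators cls) \<in> carrier_vec n"
      by (rule lincomb_closed[OF class_indicators_carrier])
    then show "dim_vec v = dim_vec (lincomb (\<lambda>e. v $ rep e) (class_indicators cls))"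
      using v by simp
    fix c assume "c < dim_vec (lincomb (\<lambda>e. v $ rep e) (class_indicators cls))"
    then have c: "c < n"
      using L by simp
    have "lincomb (\<lambda>e. v $ rep e) (class_indicators cls) $ c = v $ rep (class_indicator cls n (cls c))"
      using c by (simp add: index_lincomb_class_indicators)
    also have "\<dots> = v $ c"
      using rep[OF c] c by (intro v_const) auto
    finally show "v $ c = lincomb (\<lambda>e. v $ rep e) (class_indicators cls) $ c"
      by simp
  qed
  then show "v \<in> span (class_indicators cls)"
    by (rule in_spanI) auto
qed

lemma span_class_indicators: "span (class_indicators cls) = class_const_vecs cls n"
proof
  show "span (class_indicators cls) \<subseteq> class_const_vecs cls n"
  proof
    fix v assume "v \<in> span (class_indicators cls)"
    then obtain a where v: "v = lincomb a (class_indicators cls)"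
      unfolding finite_span[OF _ class_indicators_carrier, simplified] by blast
    have "v \<in> carrier_vec n"
      unfolding v by (rule lincomb_closed[OF class_indicators_carrier])
    moreover have "v $ c = v $ c'" if "c < n" "c' < n" "cls c = cls c'" for c c'
      using that by (simp add: v index_lincomb_class_indicators)
    ultimately show "v \<in> class_const_vecs cls n"
      by (rule class_const_vecsI)
  qed
qed (rule class_const_vecs_subset_span_class_indicators)

lemma lin_indpt_class_indicators: "lin_indpt (class_indicators cls)"
proof -
  have "\<forall>e \<in> class_indicators cls. a e = 0" if "lincomb a (class_indicators cls) = 0\<^sub>v n" for a
  proof
    fix e assume "e \<in> class_indicators cls"
    then obtain c where c: "c < n" "e = class_indicator cls n (cls c)" by blast
    then have "a e = lincomb a (class_indicators cls) $ c"
      by (simp add: index_lincomb_class_indicators)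
    then show "a e = 0"
      using that c by simp
  qed
  then show ?thesis
    by (intro finite_lin_indpt2 class_indicators_carrier) auto
qed

lemma dim_span_lin_indpt:
  assumes "E \<subseteq> carrier_vec n" "finite E" "lin_indpt E"
  shows "vectorspace.dim class_ring (span_vs E) = card E"
  using dim_span[OF assms(1,2)] assms(3) unfolding maximal_def by blast

lemma span_maximal_lin_indpt_subset:
  assumes S: "S \<subseteq> carrier_vec n" and U: "maximal U (\<lambda>T. T \<subseteq> S \<and> lin_indpt T)"
  shows "span U = span S"
proof
  have US: "U \<subseteq> S" and indU: "lin_indpt U"
    using U unfolding maximal_def by auto
  then have Uc: "U \<subseteq> carrier_vec n" using S by auto
  show "span U \<subseteq> span S" by (rule span_is_monotone[OF US])
  have "w \<in> span U" if w: "w \<in> S" for w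
  proof (rule ccontr)
    assume "w \<notin> span U"
    moreover from this have "w \<notin> U" using span_mem[OF Uc] by auto
    ultimately have "lin_indpt (U \<union> {w})"
      using lin_dep_iff_in_span[OF Uc indU, of w] w S by blast
    then show False
      using U w US \<open>w \<notin> U\<close> unfolding maximal_def by blast
  qed
  then show "span S \<subseteq> span U"
    by (intro span_is_subset span_is_submodule[OF Uc]) auto
qed

lemma span_eq_if_lin_indpt_card_eq:
  assumes E: "E \<subseteq> carrier_vec n" "finite E" "lin_indpt E"
    and U: "U \<subseteq> span E" "finite U" "lin_indpt U" "card U = card E"
  shows "span U = span E"
proof -
  have sub: "submodule class_ring (span E) V" by (rule span_is_submodule[OF E(1)])
  interpret W: vectorspace class_ring "vs (span E)"
    by (rule subspace_is_vs[OF span_is_subspace[OF E(1)]])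
  have E_in: "E \<subseteq> span E" by (rule in_own_span[OF E(1)])
  have "W.span E = span E"
    using span_li_not_depend(1)[OF E_in sub] by simp
  then have "W.fin_dim"
    unfolding W.fin_dim_def using E E_in by auto
  moreover have "W.lin_indpt U"
    using span_li_not_depend(2)[OF U(1) sub] U(3) by simp
  ultimately have "W.basis U"
    using U(1,2,4) dim_span_lin_indpt[OF E] by (intro W.dim_li_is_basis) simp_all
  then have "W.span U = span E"
    unfolding W.basis_def by simp
  then show ?thesis
    using span_li_not_depend(1)[OF U(1) sub] by simp
qed

lemma rank_eq_card_iff_span_cols_eq:
  assumes E: "E \<subseteq> carrier_vec n" "finite E" "lin_indpt E"
    and M: "M \<in> carrier_mat n nc" and cols: "set (cols M) \<subseteq> span E"
  shows "rank M = card E \<longleftrightarrow> span (set (cols M)) = span E"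
proof
  obtain U where U: "maximal U (\<lambda>T. T \<subseteq> set (cols M) \<and> lin_indpt T)"
    using ex_maximal_lin_indpt_subset[OF List.finite_set] by blast
  have UC: "U \<subseteq> set (cols M)" and indU: "lin_indpt U"
    using U unfolding maximal_def by auto
  assume "rank M = card E"
  then have "card U = card E"
    using rank_card_indpt[OF M U] by simp
  moreover have "U \<subseteq> span E"
    using UC cols by (rule subset_trans)
  ultimately have "span U = span E"
    using span_eq_if_lin_indpt_card_eq[OF E _ finite_subset[OF UC List.finite_set] indU] by simp
  then show "span (set (cols M)) = span E"
    using span_maximal_lin_indpt_subset[OF _ U] cols_dim[of M] M by simp
next
  assume "span (set (cols M)) = span E"
  then show "rank M = card E"
    using dim_span_lin_indpt[OF E] unfolding rank_def by simp
qed

end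

context cof_vec_space
begin

lemma ex_nonzero_orthogonal_in_span:
  assumes conj: "\<And>x :: 'a. conjugate x = x"
    and C: "C \<subseteq> carrier_vec n" "finite C" and s: "s \<in> carrier_vec n" "s \<notin> span C"
  shows "\<exists>v \<in> span (insert s C). v \<noteq> 0\<^sub>v n \<and> v \<in> orthogonal_complement C"
proof -
  obtain U where U: "maximal U (\<lambda>T. T \<subseteq> C \<and> lin_indpt T)"
    using ex_maximal_lin_indpt_subset[OF C(2)] by blast
  have UC: "U \<subseteq> C" and indU: "lin_indpt U"
    using U unfolding maximal_def by auto
  obtain ws where ws: "distinct ws" "set ws = U"
    using finite_distinct_list[OF finite_subset[OF UC C(2)]] by blast
  define us where "us = gram_schmidt n ws"
  note gs = gram_schmidt_result[OF _ ws(1) _ us_def, unfolded ws(2)]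
  have us: "set us \<subseteq> carrier_vec n" "distinct us" "corthogonal us"
    and span_us: "span (set us) = span C"
    using gs UC C(1) indU span_maximal_lin_indpt_subset[OF C(1) U] by auto
  define v where "v = adjuster n s us + s" \<comment> \<open>the component of \<open>s\<close> orthogonal to \<open>span C\<close>\<close>
  have sC: "insert s C \<subseteq> carrier_vec n" using s C by simp
  have "adjuster n s us \<in> span (insert s C)"
    using adjuster_in_span[OF s(1) us(1,2)] span_us span_is_monotone[of C "insert s C"] by auto
  then have in_span: "v \<in> span (insert s C)"
    unfolding v_def using span_add1[OF sC _ span_mem[OF sC]] by simp
  have nonzero: "v \<noteq> 0\<^sub>v n"
    unfolding v_def using adjust_nonzero[OF us(1,2) s(1)] s(2) span_us by simp
  have "v \<in> orthogonal_complement (set us)"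
  proof -
    have "v \<in> carrier_vec n" unfolding v_def using adjuster_carrier[OF s(1) us(1,2)] s(1) by simp
    moreover have "v \<bullet> us ! i = 0" if "i < length us" for i
      using adjust_zero[OF us(1,3) s(1) that] conjugate_vec_eq_self[OF conj] unfolding v_def by auto
    ultimately show ?thesis
      unfolding orthogonal_complement_def by (auto simp: in_set_conv_nth)
  qed
  also have "orthogonal_complement (set us) = orthogonal_complement (span (set us))"
    by (rule in_orthogonal_complement_span[OF us(1), symmetric])
  also have "\<dots> = orthogonal_complement C"
    unfolding span_us by (rule in_orthogonal_complement_span[OF C(1)])
  finally have orth: "v \<in> orthogonal_complement C" .
  show ?thesis
  proof (rule bexI)
    show "v \<noteq> 0\<^sub>v n \<and> v \<in> orthogonal_complement C"
      using nonzero orth by (rule conjI)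
  qed (rule in_span)
qed

lemma orthogonal_complement_inter_span_trivial:
  assumes conj: "\<And>x :: 'a. conjugate x = x"
    and C: "C \<subseteq> carrier_vec n" and eq: "span C = span E"
  shows "span E \<inter> orthogonal_complement C = {0\<^sub>v n}"
proof (intro equalityI subsetI)
  fix v assume v: "v \<in> span E \<inter> orthogonal_complement C"
  then have "v \<in> orthogonal_complement (span C)"
    using in_orthogonal_complement_span[OF C] by simp
  with v eq have v_carrier: "v \<in> carrier_vec n" and "v \<bullet> v = 0"
    unfolding orthogonal_complement_def by blast+
  then have "v \<bullet>c v = 0"
    using conjugate_vec_eq_self[OF conj, of v] by simp
  then show "v \<in> {0\<^sub>v n}"
    using conjugate_square_eq_0_vec[OF v_carrier] by simp
next
  fix v :: "'a vec" assume "v \<in> {0\<^sub>v n}"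
  then show "v \<in> span E \<inter> orthogonal_complement C"
    using Missing_VectorSpace.vectorspace.span_zero[OF vectorspace_axioms] C
    by (auto simp: orthogonal_complement_def)
qed

lemma span_eq_if_orthogonal_complement_trivial:
  assumes conj: "\<And>x :: 'a. conjugate x = x"
    and E: "E \<subseteq> carrier_vec n" and C: "C \<subseteq> span E" "finite C"
    and trivial: "span E \<inter> orthogonal_complement C = {0\<^sub>v n}"
  shows "span C = span E"
proof (rule ccontr)
  have E_sub: "submodule class_ring (span E) V"
    by (rule span_is_submodule[OF E])
  have C_carrier: "C \<subseteq> carrier_vec n"
    using C(1) span_closed[OF E] by blast
  assume "span C \<noteq> span E"
  moreover have "span C \<subseteq> span E"
    by (rule span_is_subset[OF C(1) E_sub])
  ultimately obtain s where s: "s \<in> span E" "s \<notin> span C"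
    by blast
  have "s \<in> carrier_vec n"
    using span_closed[OF E s(1)] by simp
  then obtain v where v: "v \<in> span (insert s C)" "v \<noteq> 0\<^sub>v n" "v \<in> orthogonal_complement C"
    using ex_nonzero_orthogonal_in_span[OF conj C_carrier C(2)] s(2) by blast
  have "span (insert s C) \<subseteq> span E"
    using s(1) C(1) by (intro span_is_subset[OF _ E_sub]) simp
  with v trivial show False
    by blast
qed

lemma rank_eq_card_iff_orthogonal_complement_trivial:
  assumes conj: "\<And>x :: 'a. conjugate x = x"
    and E: "E \<subseteq> carrier_vec n" "finite E" "lin_indpt E"
    and M: "M \<in> carrier_mat n nc" and cols: "set (cols M) \<subseteq> span E"
  shows "rank M = card E \<longleftrightarrow> span E \<inter> orthogonal_complement (set (cols M)) = {0\<^sub>v n}"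
proof -
  have C: "set (cols M) \<subseteq> carrier_vec n"
    using cols_dim[of M] M by simp
  have "span (set (cols M)) = span E \<longleftrightarrow>
      span E \<inter> orthogonal_complement (set (cols M)) = {0\<^sub>v n}"
  proof
    assume "span (set (cols M)) = span E"
    then show "span E \<inter> orthogonal_complement (set (cols M)) = {0\<^sub>v n}"
      by (rule orthogonal_complement_inter_span_trivial[OF conj C])
  next
    assume "span E \<inter> orthogonal_complement (set (cols M)) = {0\<^sub>v n}"
    then show "span (set (cols M)) = span E"
      by (rule span_eq_if_orthogonal_complement_trivial[OF conj E(1) cols List.finite_set])
  qed
  then show ?thesis
    using rank_eq_card_iff_span_cols_eq[OF E M cols] by simp
qed

lemma rank_eq_card_classes_iff:
  assumes conj: "\<And>x :: 'a. conjugate x = x"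
    and M: "M \<in> carrier_mat n nc" and cols: "set (cols M) \<subseteq> class_const_vecs cls n"
  shows "rank M = card (cls ` {..<n}) \<longleftrightarrow>
    class_const_vecs cls n \<inter> orthogonal_complement (set (cols M)) = {0\<^sub>v n}"
proof -
  have "card (class_indicators cls) = card (cls ` {..<n})"
    by (rule card_image[OF inj_on_class_indicator])
  then show ?thesis
    using rank_eq_card_iff_orthogonal_complement_trivial[OF conj class_indicators_carrier[of cls] _
        lin_indpt_class_indicators[of cls] M] cols
    by (simp add: span_class_indicators)
qed

end

section \<open>Base-\<open>n\<close> digits\<close>

definition digits :: "nat \<Rightarrow> nat \<Rightarrow> nat \<Rightarrow> nat list" where
  "digits n m c = map (\<lambda>j. c div n ^ j mod n) [0..<m]"

fun of_digits :: "nat \<Rightarrow> nat list \<Rightarrow> nat" where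
  "of_digits n [] = 0"
| "of_digits n (a # js) = a + n * of_digits n js"

lemma length_digits [simp]: "length (digits n m c) = m"
  by (simp add: digits_def)

lemma digits_Suc: "digits n (Suc m) c = c mod n # digits n m (c div n)"
proof -
  have "[0..<Suc m] = 0 # map Suc [0..<m]"
    by (simp add: map_Suc_upt upt_conv_Cons)
  then show ?thesis
    by (simp add: digits_def div_mult2_eq)
qed

lemma digits_Suc_snoc: "digits n (Suc m) c = digits n m c @ [c div n ^ m mod n]"
  by (simp add: digits_def)

lemma of_digits_digits: "of_digits n (digits n m c) = c mod n ^ m"
proof (induction m arbitrary: c)
  case 0
  show ?case by (simp add: digits_def)
next
  case (Suc m)
  then show ?case by (simp add: digits_Suc mod_mult2_eq)
qed

lemma digits_of_digits: "set js \<subseteq> {..<n} \<Longrightarrow> digits n (length js) (of_digits n js) = js"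
proof (induction js)
  case Nil
  show ?case by (simp add: digits_def)
next
  case (Cons a js)
  then show ?case by (simp add: digits_Suc)
qed

lemma of_digits_less: "set js \<subseteq> {..<n} \<Longrightarrow> of_digits n js < n ^ length js"
proof (induction js)
  case (Cons a js)
  then have "a < n" "of_digits n js + 1 \<le> n ^ length js"
    by auto
  then have "a + n * of_digits n js < n * (of_digits n js + 1)"
    by simp
  also have "\<dots> \<le> n * n ^ length js"
    using \<open>of_digits n js + 1 \<le> n ^ length js\<close> by (rule mult_le_mono2)
  finally show ?case
    by simp
qed simp

lemma digits_in_valid_idx: "0 < n \<Longrightarrow> digits n m c \<in> valid_idx n m"
  by (auto simp: valid_idx_def digits_def)

lemma digits_mod_power:
  assumes "0 < n"
  shows "digits n m (c mod n ^ m) = digits n m c"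
proof -
  have "set (digits n m c) \<subseteq> {..<n}"
    using digits_in_valid_idx[OF assms] by (simp add: valid_idx_def)
  then show ?thesis
    using digits_of_digits[of "digits n m c" n] by (simp add: of_digits_digits)
qed

lemma bij_betw_digits:
  assumes n: "0 < n"
  shows "bij_betw (digits n m) {..<n ^ m} (valid_idx n m)"
proof (rule bij_betwI')
  fix c c' assume "c \<in> {..<n ^ m}" "c' \<in> {..<n ^ m}"
  then show "(digits n m c = digits n m c') = (c = c')"
    by (metis lessThan_iff mod_less of_digits_digits)
next
  fix c show "digits n m c \<in> valid_idx n m"
    by (rule digits_in_valid_idx[OF n])
next
  fix js assume "js \<in> valid_idx n m"
  then have "length js = m" "set js \<subseteq> {..<n}"
    by (auto simp: valid_idx_def)
  then show "\<exists>c \<in> {..<n ^ m}. js = digits n m c"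
    using of_digits_less digits_of_digits by (intro bexI[of _ "of_digits n js"]) auto
qed

lemma valid_idx_Suc_obtain_digits:
  assumes "js \<in> valid_idx n (Suc m)"
  obtains c i where "c < n ^ m" "i < n" "js = digits n m c @ [i]"
proof -
  have len: "length js = Suc m" and set_js: "set js \<subseteq> {..<n}"
    using assms by (auto simp: valid_idx_def)
  then have nonempty: "js \<noteq> []"
    by auto
  then have js: "js = butlast js @ [last js]"
    by simp
  have "set (butlast js) \<subseteq> {..<n}" "last js < n"
    using set_js in_set_butlastD[of _ js] last_in_set[OF nonempty] by auto
  moreover have "length (butlast js) = m"
    using len by simp
  ultimately show ?thesis
    using js that[of "of_digits n (butlast js)" "last js"] of_digits_less digits_of_digits
    by metis
qed

lemma mset_digits_image:
  assumes n: "0 < n"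
  shows "(mset \<circ> digits n m) ` {..<n ^ m} = multisets_of_size {..<n} m"
proof -
  have "(mset \<circ> digits n m) ` {..<n ^ m} = mset ` (digits n m ` {..<n ^ m})"
    by (rule image_comp[symmetric])
  also have "\<dots> = mset ` valid_idx n m"
    using bij_betw_imp_surj_on[OF bij_betw_digits[OF n]] by (simp only:)
  also have "\<dots> = multisets_of_size {..<n} m"
  proof (intro equalityI subsetI)
    fix X assume "X \<in> multisets_of_size {..<n} m"
    moreover obtain xs where "mset xs = X"
      using ex_mset by blast
    ultimately show "X \<in> mset ` valid_idx n m"
      by (auto simp: valid_idx_def multisets_of_size_def)
  qed (auto simp: valid_idx_def multisets_of_size_def)
  finally show ?thesis .
qed

lemma card_mset_digits_image:
  "0 < n \<Longrightarrow> card ((mset \<circ> digits n m) ` {..<n ^ m}) = (n + m - 1) choose m"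
  unfolding mset_digits_image using card_multisets_of_size[of "{..<n}" m] by simp

lemma sum_choose_mult_choose:
  assumes m: "1 \<le> m"
  shows "(\<Sum>j = 1..min n m. (n choose j) * ((m - 1) choose (j - 1))) = (n + m - 1) choose m"
proof -
  have "(n + m - 1) choose m = (\<Sum>j\<le>m. (n choose j) * ((m - 1) choose (m - j)))"
    using vandermonde[of n "m - 1" m] m by simp
  also have "\<dots> = (\<Sum>j = 1..min n m. (n choose j) * ((m - 1) choose (m - j)))"
  proof (rule sum.mono_neutral_right)
    show "\<forall>j \<in> {..m} - {1..min n m}. (n choose j) * ((m - 1) choose (m - j)) = 0"
    proof
      fix j assume "j \<in> {..m} - {1..min n m}"
      then have "j = 0 \<or> n < j"
        by auto
      then show "(n choose j) * ((m - 1) choose (m - j)) = 0"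
        using m by auto
    qed
  qed auto
  also have "\<dots> = (\<Sum>j = 1..min n m. (n choose j) * ((m - 1) choose (j - 1)))"
  proof (rule sum.cong[OF refl])
    fix j assume j: "j \<in> {1..min n m}"
    then have "j - 1 \<le> m - 1"
      by auto
    then have "(m - 1) choose (j - 1) = (m - 1) choose (m - 1 - (j - 1))"
      by (rule binomial_symmetric)
    moreover have "m - 1 - (j - 1) = m - j"
      using j by auto
    ultimately show "(n choose j) * ((m - 1) choose (m - j)) = (n choose j) * ((m - 1) choose (j - 1))"
      by simp
  qed
  finally show ?thesis
    by simp
qed

section \<open>Almost symmetric tensors and their matricization\<close>

lemma index_matricize:
  "i < n \<Longrightarrow> c < n ^ m \<Longrightarrow> matricize n (Suc m) B $$ (i, c) = B (digits n m c @ [i])"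
  by (simp add: matricize_def digits_def)

lemma dim_matricize [simp]:
  "dim_row (matricize n k B) = n" "dim_col (matricize n k B) = n ^ (k - 1)"
  by (simp_all add: matricize_def)

lemma matricize_carrier: "matricize n (Suc m) B \<in> carrier_mat n (n ^ m)"
  by (simp add: carrier_matI)

lemma digits_snoc_in_valid_idx: "i < n \<Longrightarrow> digits n m c @ [i] \<in> valid_idx n (Suc m)"
  using digits_in_valid_idx[of n m c] by (simp add: valid_idx_def)

lemma map_nth_snoc_permutes:
  assumes p: "p permutes {..<length xs}"
  shows "map (\<lambda>l. (xs @ [a]) ! p l) [0..<Suc (length xs)] = permute_list p xs @ [a]"
proof -
  have "p (length xs) = length xs"
    using p by (simp add: permutes_not_in)
  moreover have "p l < length xs" if "l < length xs" for l
    using permutes_in_image[OF p, of l] that by simp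
  ultimately show ?thesis
    by (simp add: permute_list_def nth_append)
qed

lemma row_matricize_class_const:
  assumes B: "almost_symmetric n (Suc m) B" and i: "i < n"
  shows "row (matricize n (Suc m) B) i \<in> class_const_vecs (mset \<circ> digits n m) (n ^ m)"
proof (rule class_const_vecsI)
  show "row (matricize n (Suc m) B) i \<in> carrier_vec (n ^ m)"
    by (simp add: matricize_def row_def)
  fix c c' assume c: "c < n ^ m" "c' < n ^ m" and "(mset \<circ> digits n m) c = (mset \<circ> digits n m) c'"
  then have "mset (digits n m c) = mset (digits n m c')"
    by simp
  then obtain p where "p permutes {..<length (digits n m c')}" "permute_list p (digits n m c') = digits n m c"
    by (rule mset_eq_permutation)
  then have p: "p permutes {..<m}" "permute_list p (digits n m c') = digits n m c"
    by simp_all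
  have "B (map (\<lambda>l. (digits n m c' @ [i]) ! p l) [0..<Suc m]) = B (digits n m c' @ [i])"
    using B digits_snoc_in_valid_idx[OF i] p(1) unfolding almost_symmetric_def by simp
  then show "row (matricize n (Suc m) B) i $ c = row (matricize n (Suc m) B) i $ c'"
    using map_nth_snoc_permutes[of p "digits n m c'" i] p c i by (simp add: index_matricize)
qed

lemma almost_symmetric_if_rows_class_const:
  assumes B: "is_tensor n (Suc m) B"
    and rows: "\<And>i. i < n \<Longrightarrow> row (matricize n (Suc m) B) i \<in> class_const_vecs (mset \<circ> digits n m) (n ^ m)"
  shows "almost_symmetric n (Suc m) B"
  unfolding almost_symmetric_def
proof (intro conjI ballI allI impI B)
  fix js p assume "js \<in> valid_idx n (Suc m)" and p: "p permutes {..<Suc m - 1}"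
  then obtain c i where c: "c < n ^ m" and i: "i < n" and js: "js = digits n m c @ [i]"
    by (elim valid_idx_Suc_obtain_digits)
  define ys where "ys = permute_list p (digits n m c)"
  have p': "p permutes {..<length (digits n m c)}"
    using p by simp
  have mset_ys: "mset ys = mset (digits n m c)"
    unfolding ys_def by (rule mset_permute_list[OF p'])
  have "set (digits n m c) \<subseteq> {..<n}"
    using digits_in_valid_idx[of n m c] i by (simp add: valid_idx_def)
  then have set_ys: "set ys \<subseteq> {..<n}"
    using mset_eq_setD[OF mset_ys] by simp
  have len_ys: "length ys = m"
    by (simp add: ys_def)
  have ys: "digits n m (of_digits n ys) = ys"
    using digits_of_digits[OF set_ys] len_ys by simp
  have ys_less: "of_digits n ys < n ^ m"
    using of_digits_less[OF set_ys] len_ys by simp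
  have cls: "(mset \<circ> digits n m) (of_digits n ys) = (mset \<circ> digits n m) c"
    using ys mset_ys by simp
  have "B (map (\<lambda>l. js ! p l) [0..<Suc m]) = B (ys @ [i])"
    using map_nth_snoc_permutes[OF p', of i] by (simp add: js ys_def)
  also have "\<dots> = row (matricize n (Suc m) B) i $ of_digits n ys"
    using ys ys_less i by (simp add: index_matricize)
  also have "\<dots> = row (matricize n (Suc m) B) i $ c"
    by (rule class_const_vecsD(2)[OF rows[OF i] ys_less c cls])
  also have "\<dots> = B js"
    using c i by (simp add: js index_matricize)
  finally show "B (map (\<lambda>l. js ! p l) [0..<Suc m]) = B js" .
qed

lemma matricize_inj:
  assumes "is_tensor n (Suc m) B" "is_tensor n (Suc m) C"
    and eq: "matricize n (Suc m) B = matricize n (Suc m) C"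
  shows "B = C"
proof
  fix js
  show "B js = C js"
  proof (cases "js \<in> valid_idx n (Suc m)")
    case True
    then obtain c i where "c < n ^ m" "i < n" "js = digits n m c @ [i]"
      by (elim valid_idx_Suc_obtain_digits)
    then show ?thesis
      using arg_cong[OF eq, of "\<lambda>M. M $$ (i, c)"] by (simp add: index_matricize)
  next
    case False
    then show ?thesis
      using assms(1,2) by (simp add: is_tensor_def)
  qed
qed

lemma almost_symmetric_add:
  "almost_symmetric n k A \<Longrightarrow> almost_symmetric n k B \<Longrightarrow> almost_symmetric n k (\<lambda>js. A js + B js)"
  by (simp add: almost_symmetric_def is_tensor_def)

lemma matricize_add: "matricize n k (\<lambda>js. A js + B js) = matricize n k A + matricize n k B"
  by (rule eq_matI) (simp_all add: matricize_def)

lemma mem_orthogonal_complement_cols_iff: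
  "v \<in> vec_module.orthogonal_complement N (set (cols K)) \<longleftrightarrow>
     v \<in> carrier_vec N \<and> (\<forall>t < dim_col K. v \<bullet> col K t = 0)"
  by (auto simp: vec_module.orthogonal_complement_def cols_def)

definition row_tensor :: "nat \<Rightarrow> nat \<Rightarrow> real vec \<Rightarrow> tensor" where
  "row_tensor n m v js = (if js \<in> valid_idx n (Suc m) then v $ of_digits n (butlast js) else 0)"

lemma row_matricize_row_tensor:
  assumes v: "v \<in> carrier_vec (n ^ m)" and i: "i < n"
  shows "row (matricize n (Suc m) (row_tensor n m v)) i = v"
proof (rule eq_vecI)
  show "dim_vec (row (matricize n (Suc m) (row_tensor n m v)) i) = dim_vec v"
    using v by simp
  fix c assume "c < dim_vec v"
  then show "row (matricize n (Suc m) (row_tensor n m v)) i $ c = v $ c"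
    using v i digits_snoc_in_valid_idx[OF i]
    by (simp add: index_matricize row_tensor_def of_digits_digits)
qed

lemma almost_symmetric_row_tensor:
  assumes "v \<in> class_const_vecs (mset \<circ> digits n m) (n ^ m)"
  shows "almost_symmetric n (Suc m) (row_tensor n m v)"
proof (rule almost_symmetric_if_rows_class_const)
  show "is_tensor n (Suc m) (row_tensor n m v)"
    by (simp add: is_tensor_def row_tensor_def)
  show "row (matricize n (Suc m) (row_tensor n m v)) i \<in> class_const_vecs (mset \<circ> digits n m) (n ^ m)"
    if "i < n" for i
    using row_matricize_row_tensor[OF class_const_vecsD(1)[OF assms] that] assms by simp
qed

lemma row_diff_class_const_orthogonal:
  assumes K: "K \<in> carrier_mat (n ^ m) T"
    and A: "almost_symmetric n (Suc m) A" and B: "almost_symmetric n (Suc m) B"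
    and eq: "matricize n (Suc m) B * K = matricize n (Suc m) A * K" and i: "i < n"
  shows "row (matricize n (Suc m) B) i - row (matricize n (Suc m) A) i \<in>
    class_const_vecs (mset \<circ> digits n m) (n ^ m) \<inter> vec_module.orthogonal_complement (n ^ m) (set (cols K))"
proof -
  let ?r = "row (matricize n (Suc m) B) i - row (matricize n (Suc m) A) i"
  have rows: "row (matricize n (Suc m) B) i \<in> carrier_vec (n ^ m)"
    "row (matricize n (Suc m) A) i \<in> carrier_vec (n ^ m)"
    using i matricize_carrier by simp_all
  have "?r \<bullet> col K t = 0" if t: "t < T" for t
  proof -
    have "?r \<bullet> col K t =
        row (matricize n (Suc m) B) i \<bullet> col K t - row (matricize n (Suc m) A) i \<bullet> col K t"
      using K t by (intro minus_scalar_prod_distrib[OF rows]) simp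
    also have "\<dots> = (matricize n (Suc m) B * K) $$ (i, t) - (matricize n (Suc m) A * K) $$ (i, t)"
      using K i t by simp
    finally show ?thesis
      using eq by simp
  qed
  then have "?r \<in> vec_module.orthogonal_complement (n ^ m) (set (cols K))"
    using rows K by (simp add: mem_orthogonal_complement_cols_iff)
  moreover have "?r \<in> class_const_vecs (mset \<circ> digits n m) (n ^ m)"
    using row_matricize_class_const[OF _ i] A B by (intro minus_class_const_vecs) auto
  ultimately show ?thesis
    by blast
qed

lemma almost_symmetric_solutions_eq:
  assumes K: "K \<in> carrier_mat (n ^ m) T"
    and trivial: "class_const_vecs (mset \<circ> digits n m) (n ^ m) \<inter>
      vec_module.orthogonal_complement (n ^ m) (set (cols K)) = {0\<^sub>v (n ^ m)}"
    and A: "almost_symmetric n (Suc m) A" and B: "almost_symmetric n (Suc m) B"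
    and eq: "matricize n (Suc m) B * K = matricize n (Suc m) A * K"
  shows "B = A"
proof -
  have "row (matricize n (Suc m) B) i = row (matricize n (Suc m) A) i" if i: "i < n" for i
  proof (rule eq_vecI)
    fix c assume "c < dim_vec (row (matricize n (Suc m) A) i)"
    then have c: "c < n ^ m"
      by simp
    have "row (matricize n (Suc m) B) i - row (matricize n (Suc m) A) i = 0\<^sub>v (n ^ m)"
      using row_diff_class_const_orthogonal[OF K A B eq i] trivial by blast
    from arg_cong[OF this, of "\<lambda>v. v $ c"] c i
    show "row (matricize n (Suc m) B) i $ c = row (matricize n (Suc m) A) i $ c"
      by simp
  qed simp
  then have "matricize n (Suc m) B = matricize n (Suc m) A"
    by (intro eq_rowI) simp_all
  moreover have "is_tensor n (Suc m) B" "is_tensor n (Suc m) A"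
    using A B unfolding almost_symmetric_def by blast+
  ultimately show "B = A"
    by (intro matricize_inj)
qed

lemma ex1_almost_symmetric_solution_iff:
  assumes n: "0 < n" and K: "K \<in> carrier_mat (n ^ m) T" and Y: "Y \<in> carrier_mat n T"
    and A: "almost_symmetric n (Suc m) A" and A_sol: "matricize n (Suc m) A * K = Y"
  shows "(\<exists>!B. almost_symmetric n (Suc m) B \<and> matricize n (Suc m) B * K = Y) \<longleftrightarrow>
    class_const_vecs (mset \<circ> digits n m) (n ^ m) \<inter> vec_module.orthogonal_complement (n ^ m) (set (cols K))
      = {0\<^sub>v (n ^ m)}"
    (is "?unique \<longleftrightarrow> ?S \<inter> ?O = _")
proof
  assume unique: ?unique
  show "?S \<inter> ?O = {0\<^sub>v (n ^ m)}"
  proof (intro equalityI subsetI)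
    fix v assume v: "v \<in> ?S \<inter> ?O"
    then have v_carrier: "v \<in> carrier_vec (n ^ m)" and orth: "\<And>t. t < T \<Longrightarrow> v \<bullet> col K t = 0"
      using K by (auto simp: mem_orthogonal_complement_cols_iff)
    let ?P = "row_tensor n m v"
    have "matricize n (Suc m) ?P * K = 0\<^sub>m n T"
      using K matricize_carrier row_matricize_row_tensor[OF v_carrier] orth by (intro eq_matI) simp_all
    then have "matricize n (Suc m) (\<lambda>js. A js + ?P js) * K = Y"
      using A_sol Y by (simp add: matricize_add add_mult_distrib_mat[OF matricize_carrier matricize_carrier K])
    moreover have "almost_symmetric n (Suc m) (\<lambda>js. A js + ?P js)"
      using A almost_symmetric_row_tensor v by (intro almost_symmetric_add) auto
    ultimately have "(\<lambda>js. A js + ?P js) = A"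
      using A A_sol unique by blast
    then have P_zero: "?P (digits n m c @ [0]) = 0" for c
      by (metis add_cancel_left_right)
    have "v $ c = 0" if "c < n ^ m" for c
      using P_zero[of c] that n digits_snoc_in_valid_idx[of 0 n m c]
      by (simp add: row_tensor_def of_digits_digits)
    then show "v \<in> {0\<^sub>v (n ^ m)}"
      using v_carrier by (auto intro: eq_vecI)
  next
    fix v :: "real vec" assume "v \<in> {0\<^sub>v (n ^ m)}"
    then show "v \<in> ?S \<inter> ?O"
      using K by (auto intro!: class_const_vecsI simp: mem_orthogonal_complement_cols_iff)
  qed
next
  assume trivial: "?S \<inter> ?O = {0\<^sub>v (n ^ m)}"
  show ?unique
  proof (rule ex1I[of _ A])
    show "almost_symmetric n (Suc m) A \<and> matricize n (Suc m) A * K = Y"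
      using A A_sol by simp
    show "B = A" if "almost_symmetric n (Suc m) B \<and> matricize n (Suc m) B * K = Y" for B
      using that A_sol by (intro almost_symmetric_solutions_eq[OF K trivial A]) simp_all
  qed
qed

section \<open>Khatri-Rao powers of the data matrix\<close>

lemma prod_list_map_conv_prod_nth: "prod_list (map f xs) = (\<Prod>j<length xs. f (xs ! j))"
  by (simp add: prod.list_conv_set_nth lessThan_atLeast0)

lemma kr_power_carrier: "X \<in> carrier_mat n T \<Longrightarrow> kr_power X m \<in> carrier_mat (n ^ m) T"
  by (induction X m rule: kr_power.induct) (auto simp: khatri_rao_def)

lemma index_kr_power:
  assumes "X \<in> carrier_mat n T" "0 < n" "c < n ^ m" "t < T"
  shows "kr_power X m $$ (c, t) = prod_list (map (\<lambda>a. X $$ (a, t)) (digits n m c))"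
  using assms
proof (induction X m arbitrary: c rule: kr_power.induct)
  case (1 X)
  then show ?case by (simp add: digits_def)
next
  case (2 X)
  then show ?case by (simp add: digits_def)
next
  case (3 X m)
  let ?K = "kr_power X (Suc m)"
  have X: "X \<in> carrier_mat n T" and K: "?K \<in> carrier_mat (n ^ Suc m) T"
    using 3 kr_power_carrier by blast+
  have top: "c div n ^ Suc m < n"
    using "3.prems"(3) by (simp add: less_mult_imp_div_less mult.commute)
  have "kr_power X (Suc (Suc m)) $$ (c, t) = X $$ (c div n ^ Suc m, t) * ?K $$ (c mod n ^ Suc m, t)"
    using X K "3.prems"(3,4) by (simp add: khatri_rao_def)
  also have "?K $$ (c mod n ^ Suc m, t) =
      prod_list (map (\<lambda>a. X $$ (a, t)) (digits n (Suc m) (c mod n ^ Suc m)))"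
    using "3.IH"[OF X "3.prems"(2) _ "3.prems"(4)] "3.prems"(2) by simp
  also have "digits n (Suc m) (c mod n ^ Suc m) = digits n (Suc m) c"
    by (rule digits_mod_power[OF "3.prems"(2)])
  finally show ?case
    using top by (simp add: digits_Suc_snoc[of n "Suc m"])
qed

lemma cols_kr_power_class_const:
  assumes X: "X \<in> carrier_mat n T" and n: "0 < n"
  shows "set (cols (kr_power X m)) \<subseteq> class_const_vecs (mset \<circ> digits n m) (n ^ m)"
proof
  have K: "kr_power X m \<in> carrier_mat (n ^ m) T"
    by (rule kr_power_carrier[OF X])
  fix w assume "w \<in> set (cols (kr_power X m))"
  then obtain t where t: "t < T" and w: "w = col (kr_power X m) t"
    using K by (auto simp: cols_def)
  show "w \<in> class_const_vecs (mset \<circ> digits n m) (n ^ m)"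
  proof (rule class_const_vecsI)
    show "w \<in> carrier_vec (n ^ m)"
      using w t K by simp
    fix c c' assume c: "c < n ^ m" "c' < n ^ m"
      and "(mset \<circ> digits n m) c = (mset \<circ> digits n m) c'"
    then have "mset (map (\<lambda>a. X $$ (a, t)) (digits n m c)) = mset (map (\<lambda>a. X $$ (a, t)) (digits n m c'))"
      by simp
    then have "prod_list (map (\<lambda>a. X $$ (a, t)) (digits n m c)) =
        prod_list (map (\<lambda>a. X $$ (a, t)) (digits n m c'))"
      unfolding prod_mset_prod_list[symmetric] by (rule arg_cong)
    then show "w $ c = w $ c'"
      using w t c K by (simp add: index_kr_power[OF X n])
  qed
qed

lemma tensor_apply_eq_sum_matricize:
  assumes n: "0 < n" and i: "i < n"
  shows "tensor_apply n (Suc m) A x i =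
    (\<Sum>c<n ^ m. matricize n (Suc m) A $$ (i, c) * prod_list (map x (digits n m c)))"
proof -
  have "tensor_apply n (Suc m) A x i = (\<Sum>js \<in> valid_idx n m. A (js @ [i]) * prod_list (map x js))"
    unfolding tensor_apply_def prod_list_map_conv_prod_nth by (intro sum.cong) (auto simp: valid_idx_def)
  also have "\<dots> = (\<Sum>c<n ^ m. A (digits n m c @ [i]) * prod_list (map x (digits n m c)))"
    by (rule sum.reindex_bij_betw[OF bij_betw_digits[OF n], symmetric])
  also have "\<dots> = (\<Sum>c<n ^ m. matricize n (Suc m) A $$ (i, c) * prod_list (map x (digits n m c)))"
    using i by (intro sum.cong) (simp_all add: index_matricize)
  finally show ?thesis .
qed

lemma matricize_mult_kr_power_data_mat:
  assumes n: "0 < n"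
    and ode: "\<And>s i. s < T \<Longrightarrow> i < n \<Longrightarrow>
      xd (t0 + real s * \<tau>) i = tensor_apply n (Suc m) A (x (t0 + real s * \<tau>)) i"
  shows "matricize n (Suc m) A * kr_power (data_mat n T t0 \<tau> x) m = data_mat n T t0 \<tau> xd"
proof -
  let ?X = "data_mat n T t0 \<tau> x"
  have X: "?X \<in> carrier_mat n T"
    by (simp add: data_mat_def)
  have K: "kr_power ?X m \<in> carrier_mat (n ^ m) T"
    by (rule kr_power_carrier[OF X])
  show ?thesis
  proof (rule eq_matI)
    fix i s assume "i < dim_row (data_mat n T t0 \<tau> xd)" "s < dim_col (data_mat n T t0 \<tau> xd)"
    then have i: "i < n" and s: "s < T"
      by (simp_all add: data_mat_def)
    have "(matricize n (Suc m) A * kr_power ?X m) $$ (i, s) =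
        (\<Sum>c<n ^ m. matricize n (Suc m) A $$ (i, c) * kr_power ?X m $$ (c, s))"
      using i s K by (simp add: scalar_prod_def lessThan_atLeast0)
    also have "\<dots> = (\<Sum>c<n ^ m. matricize n (Suc m) A $$ (i, c) *
        prod_list (map (x (t0 + real s * \<tau>)) (digits n m c)))"
    proof (intro sum.cong refl arg_cong[where f = "(*) _"])
      fix c assume "c \<in> {..<n ^ m}"
      then have "kr_power ?X m $$ (c, s) = prod_list (map (\<lambda>a. ?X $$ (a, s)) (digits n m c))"
        using s by (intro index_kr_power[OF X n]) simp_all
      also have "map (\<lambda>a. ?X $$ (a, s)) (digits n m c) = map (x (t0 + real s * \<tau>)) (digits n m c)"
        using digits_in_valid_idx[OF n, of m c] s by (intro map_cong) (auto simp: valid_idx_def data_mat_def)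
      finally show "kr_power ?X m $$ (c, s) = prod_list (map (x (t0 + real s * \<tau>)) (digits n m c))" .
    qed
    also have "\<dots> = data_mat n T t0 \<tau> xd $$ (i, s)"
      using i s by (simp add: tensor_apply_eq_sum_matricize[OF n i] ode data_mat_def)
    finally show "(matricize n (Suc m) A * kr_power ?X m) $$ (i, s) = data_mat n T t0 \<tau> xd $$ (i, s)" .
  qed (use K in \<open>simp_all add: data_mat_def\<close>)
qed

lemma sample_time_in_interval:
  assumes "0 \<le> \<tau>" and "s < T"
  shows "t0 + real s * \<tau> \<in> {t0 .. t0 + real (T - 1) * \<tau>}"
proof -
  have "real s * \<tau> \<le> real (T - 1) * \<tau>"
    using assms by (intro mult_right_mono) simp_all
  then show ?thesis
    using assms by simp
qed

theorem mainTheorem1: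
  fixes n k T :: nat and t0 \<tau> :: real
    and x xd :: "real \<Rightarrow> nat \<Rightarrow> real" and A :: tensor
  assumes "n \<ge> 1" and "k \<ge> 2" and "\<tau> > 0"
    and "almost_symmetric n k A"
    and "\<And>t i. t \<in> {t0 .. t0 + real (T - 1) * \<tau>} \<Longrightarrow> i < n \<Longrightarrow>
           ((\<lambda>s. x s i) has_real_derivative xd t i) (at t)"
    and "\<And>t i. t \<in> {t0 .. t0 + real (T - 1) * \<tau>} \<Longrightarrow> i < n \<Longrightarrow>
           xd t i = tensor_apply n k A (x t) i"
  shows "(\<exists>!B. almost_symmetric n k B \<and>
            matricize n k B * kr_power (data_mat n T t0 \<tau> x) (k - 1) = data_mat n T t0 \<tau> xd)
         \<longleftrightarrow> mat_rank (kr_power (data_mat n T t0 \<tau> x) (k - 1))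
               = (\<Sum>j = 1..min n (k - 1). (n choose j) * ((k - 2) choose (j - 1)))"
proof -
  obtain m where k: "k = Suc m"
    using \<open>k \<ge> 2\<close> by (cases k) auto
  with \<open>k \<ge> 2\<close> have m: "1 \<le> m"
    by simp
  have n: "0 < n"
    using \<open>n \<ge> 1\<close> by simp
  let ?X = "data_mat n T t0 \<tau> x" and ?Y = "data_mat n T t0 \<tau> xd"
  let ?K = "kr_power ?X m" and ?cls = "mset \<circ> digits n m"
  have X: "?X \<in> carrier_mat n T" and Y: "?Y \<in> carrier_mat n T"
    by (simp_all add: data_mat_def)
  have K: "?K \<in> carrier_mat (n ^ m) T"
    by (rule kr_power_carrier[OF X])
  have A_sol: "matricize n (Suc m) A * ?K = ?Y"
    using assms(6)[OF sample_time_in_interval] \<open>\<tau> > 0\<close> unfolding k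
    by (intro matricize_mult_kr_power_data_mat[OF n]) simp
  have "(\<exists>!B. almost_symmetric n (Suc m) B \<and> matricize n (Suc m) B * ?K = ?Y) \<longleftrightarrow>
      class_const_vecs ?cls (n ^ m) \<inter> vec_module.orthogonal_complement (n ^ m) (set (cols ?K)) = {0\<^sub>v (n ^ m)}"
    using ex1_almost_symmetric_solution_iff[OF n K Y _ A_sol] assms(4) unfolding k by simp
  also have "\<dots> \<longleftrightarrow> mat_rank ?K = card (?cls ` {..<n ^ m})"
    using cof_vec_space.rank_eq_card_classes_iff[OF _ K cols_kr_power_class_const[OF X n]] K
    by (simp add: mat_rank_def)
  also have "card (?cls ` {..<n ^ m}) = (\<Sum>j = 1..min n m. (n choose j) * ((m - 1) choose (j - 1)))"
    using card_mset_digits_image[OF n] sum_choose_mult_choose[OF m] by simp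
  finally show ?thesis
    unfolding k by simp
qed

end
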